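(* Let $\mu_t(s,a)=\mathbb P_{\pi^{\mathrm{expl}}}(s_t=s,\ a_t=a)$ for $t\in[T]$, $(s,a)\in\mathcal S\times\mathcal A$. Suppose that for every $(s,a)$ there is some $t$ with $\mu_t(s,a)>0$. Then the covering length $L$ satisfies $$\frac{\log 2}{2\min_{(s,a)\in\mathcal S\times\mathcal A}\sum_{t\in[T]}\mu_t(s,a)}\ \le\ L\ \le\ \left\lceil\frac{\log(2SA)}{\min_{(s,a)\in\mathcal S\times\mathcal A}\max_{t\in[T]}\mu_t(s,a)}\right\rceil .$$
   Context: Deterministic finite-horizon MDP $\mathcal M=(\mathcal S,\mathcal A,T,s_1,f,R)$ with finite state set of size $S=|\mathcal S|$ and action set of size $A=|\mathcal A|$, start state $s_1$, transitions $s_{t+1}=f(s_t,a_t)$, steps $t\in[T]$. $\pi^{\mathrm{expl}}$ is a fixed exploration policy (maps $\pi^{\mathrm{expl}}_t:\mathcal S\to\Delta(\mathcal A)$), and $\mathbb P_{\pi^{\mathrm{expl}}}$ is the law of an episode from $s_1$ following it. The covering length $L$ is the least number of independent episodes run with $\pi^{\mathrm{expl}}$ such that, with probability at least $1/2$, every pair $(s,a)\in\mathcal S\times\mathcal A$ is visited (at some step of some episode). *)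

theory Defs
  imports "HOL-Probability.Probability"
begin

text \<open>Law of an episode of the deterministic MDP with transition map f, following the
(step-dependent, randomized) policy pol, from step t onwards for n remaining steps, starting at s.\<close>
fun episode_from :: "(nat \<Rightarrow> 's \<Rightarrow> 'a pmf) \<Rightarrow> ('s \<Rightarrow> 'a \<Rightarrow> 's) \<Rightarrow> nat \<Rightarrow> nat \<Rightarrow> 's \<Rightarrow> ('s \<times> 'a) list pmf" where
  "episode_from pol f t 0 s = return_pmf []"
| "episode_from pol f t (Suc n) s =
     bind_pmf (pol t s) (\<lambda>a. bind_pmf (episode_from pol f (Suc t) n (f s a)) (\<lambda>rest. return_pmf ((s, a) # rest)))"

text \<open>Full episode over steps 1..T from start state s1; the list entry with index t-1 is (s_t,a_t).\<close>
definition episode :: "(nat \<Rightarrow> 's \<Rightarrow> 'a pmf) \<Rightarrow> ('s \<Rightarrow> 'a \<Rightarrow> 's) \<Rightarrow> nat \<Rightarrow> 's \<Rightarrow> ('s \<times> 'a) list pmf" where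
  "episode pol f T s1 = episode_from pol f 1 T s1"

definition occupancy :: "(nat \<Rightarrow> 's \<Rightarrow> 'a pmf) \<Rightarrow> ('s \<Rightarrow> 'a \<Rightarrow> 's) \<Rightarrow> nat \<Rightarrow> 's \<Rightarrow> nat \<Rightarrow> 's \<Rightarrow> 'a \<Rightarrow> real" where
  "occupancy pol f T s1 t s a = measure_pmf.prob (episode pol f T s1) {\<tau>. \<tau> ! (t - 1) = (s, a)}"

fun iid_pmf :: "'b pmf \<Rightarrow> nat \<Rightarrow> 'b list pmf" where
  "iid_pmf p 0 = return_pmf []"
| "iid_pmf p (Suc n) = bind_pmf p (\<lambda>x. bind_pmf (iid_pmf p n) (\<lambda>xs. return_pmf (x # xs)))"

definition covers :: "('s \<times> 'a) list list \<Rightarrow> bool" where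
  "covers taus \<longleftrightarrow> (\<forall>sa. \<exists>\<tau>\<in>set taus. sa \<in> set \<tau>)"

definition covering_length :: "(nat \<Rightarrow> 's \<Rightarrow> 'a pmf) \<Rightarrow> ('s \<Rightarrow> 'a \<Rightarrow> 's) \<Rightarrow> nat \<Rightarrow> 's \<Rightarrow> nat" where
  "covering_length pol f T s1 =
     (LEAST n. measure_pmf.prob (iid_pmf (episode pol f T s1) n) {taus. covers taus} \<ge> 1 / 2)"

end

theory Submission
  imports Defs
begin

text \<open>Write \<open>p(s,a)\<close> for the probability that a single episode visits \<open>(s,a)\<close>. It lies between
  \<open>max\<^sub>t \<mu>\<^sub>t(s,a)\<close> and \<open>\<Sum>\<^sub>t \<mu>\<^sub>t(s,a)\<close>, and \<open>n\<close> independent episodes all miss \<open>(s,a)\<close> with probability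
  \<open>(1 - p(s,a))\<^sup>n\<close>. A union bound over the \<open>SA\<close> pairs gives coverage with probability at least
  \<open>1 - SA (1 - q)\<^sup>n \<ge> 1 - SA e\<^sup>-\<^sup>q\<^sup>n\<close> for \<open>q = min max\<^sub>t \<mu>\<^sub>t\<close>, which is at least \<open>1/2\<close> once
  \<open>n \<ge> log(2SA)/q\<close>. Conversely, coverage with probability \<open>1/2\<close> forces \<open>(1 - p)\<^sup>L \<le> 1/2\<close> for
  every pair, and \<open>ln (1 - p) \<ge> -2p\<close> for \<open>p \<le> 1/2\<close> turns this into \<open>L \<ge> log 2 / (2p)\<close>.\<close>

lemma prob_iid_pmf_all:
  "measure_pmf.prob (iid_pmf p n) {xs. \<forall>x\<in>set xs. Q x} = measure_pmf.prob p {x. Q x} ^ n"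
proof -
  have "emeasure (iid_pmf p n) {xs. \<forall>x\<in>set xs. Q x} = emeasure (measure_pmf p) {x. Q x} ^ n"
  proof (induction n)
    case 0
    then show ?case by simp
  next
    case (Suc n)
    have "\<And>x xs. indicator {xs. \<forall>x\<in>set xs. Q x} (x # xs)
        = (indicator {x. Q x} x * indicator {xs. \<forall>x\<in>set xs. Q x} xs :: ennreal)"
      by (simp add: indicator_def)
    then have "emeasure (iid_pmf p (Suc n)) {xs. \<forall>x\<in>set xs. Q x}
        = (\<integral>\<^sup>+x. indicator {x. Q x} x * emeasure (iid_pmf p n) {xs. \<forall>x\<in>set xs. Q x} \<partial>p)"
      by (simp add: nn_integral_cmult)
    also have "\<dots> = emeasure (measure_pmf p) {x. Q x} ^ Suc n"
      by (simp add: nn_integral_multc Suc.IH)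
    finally show ?case .
  qed
  then show ?thesis
    by (simp add: measure_pmf.emeasure_eq_measure ennreal_power)
qed

lemma prob_Collect_not:
  "measure_pmf.prob p {x. \<not> P x} = 1 - measure_pmf.prob p {x. P x}"
proof -
  have "{x. \<not> P x} = space (measure_pmf p) - {x. P x}" by auto
  then show ?thesis by (simp only: measure_pmf.prob_compl sets_measure_pmf UNIV_I)
qed

lemma length_episode_from: "\<tau> \<in> set_pmf (episode_from pol f t n s) \<Longrightarrow> length \<tau> = n"
  by (induction n arbitrary: t s \<tau>) auto

lemma length_episode: "\<tau> \<in> set_pmf (episode pol f T s1) \<Longrightarrow> length \<tau> = T"
  unfolding episode_def by (rule length_episode_from)

lemma occupancy_le_prob_visit:
  assumes "t \<in> {1..T}"
  shows "occupancy pol f T s1 t s a \<le> measure_pmf.prob (episode pol f T s1) {\<tau>. (s, a) \<in> set \<tau>}"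
proof -
  let ?E = "episode pol f T s1"
  have "{\<tau>. \<tau> ! (t - 1) = (s, a)} \<inter> set_pmf ?E \<subseteq> {\<tau>. (s, a) \<in> set \<tau>}"
    using assms by (auto dest!: length_episode intro!: exI[of _ "t - 1"] simp: in_set_conv_nth)
  then have "measure_pmf.prob ?E ({\<tau>. \<tau> ! (t - 1) = (s, a)} \<inter> set_pmf ?E)
      \<le> measure_pmf.prob ?E {\<tau>. (s, a) \<in> set \<tau>}"
    by (rule measure_pmf.finite_measure_mono) simp
  then show ?thesis
    unfolding occupancy_def by (simp add: measure_Int_set_pmf)
qed

lemma prob_visit_le_sum_occupancy:
  "measure_pmf.prob (episode pol f T s1) {\<tau>. (s, a) \<in> set \<tau>} \<le> (\<Sum>t\<in>{1..T}. occupancy pol f T s1 t s a)"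
proof -
  let ?E = "episode pol f T s1"
  have "{\<tau>. (s, a) \<in> set \<tau>} \<inter> set_pmf ?E \<subseteq> (\<Union>t\<in>{1..T}. {\<tau>. \<tau> ! (t - 1) = (s, a)})"
  proof
    fix \<tau> assume "\<tau> \<in> {\<tau>. (s, a) \<in> set \<tau>} \<inter> set_pmf ?E"
    then obtain i where "i < T" "\<tau> ! i = (s, a)"
      by (auto dest!: length_episode simp: in_set_conv_nth)
    then show "\<tau> \<in> (\<Union>t\<in>{1..T}. {\<tau>. \<tau> ! (t - 1) = (s, a)})"
      by (intro UN_I[of "Suc i"]) auto
  qed
  then have "measure_pmf.prob ?E ({\<tau>. (s, a) \<in> set \<tau>} \<inter> set_pmf ?E)
      \<le> measure_pmf.prob ?E (\<Union>t\<in>{1..T}. {\<tau>. \<tau> ! (t - 1) = (s, a)})"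
    by (rule measure_pmf.finite_measure_mono) simp
  also have "\<dots> \<le> (\<Sum>t\<in>{1..T}. measure_pmf.prob ?E {\<tau>. \<tau> ! (t - 1) = (s, a)})"
    by (rule measure_pmf.finite_measure_subadditive_finite) auto
  finally show ?thesis
    unfolding occupancy_def by (simp add: measure_Int_set_pmf)
qed

lemma prob_covers_iid_le:
  "measure_pmf.prob (iid_pmf E n) {taus. covers taus}
     \<le> 1 - (1 - measure_pmf.prob E {\<tau>. sa \<in> set \<tau>}) ^ n"
proof -
  have "{taus. covers taus} \<subseteq> {taus. \<not> (\<forall>\<tau>\<in>set taus. sa \<notin> set \<tau>)}"
    unfolding covers_def by (cases sa) auto
  then have "measure_pmf.prob (iid_pmf E n) {taus. covers taus}
      \<le> measure_pmf.prob (iid_pmf E n) {taus. \<not> (\<forall>\<tau>\<in>set taus. sa \<notin> set \<tau>)}"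
    by (rule measure_pmf.finite_measure_mono) simp
  then show ?thesis
    by (simp only: prob_Collect_not prob_iid_pmf_all)
qed

lemma prob_covers_iid_ge:
  fixes E :: "('s::finite \<times> 'a::finite) list pmf"
  assumes "\<forall>sa. q \<le> measure_pmf.prob E {\<tau>. sa \<in> set \<tau>}"
  shows "1 - real CARD('s \<times> 'a) * (1 - q) ^ n \<le> measure_pmf.prob (iid_pmf E n) {taus. covers taus}"
proof -
  have not_covers: "{taus. \<not> covers taus} = (\<Union>sa. {taus. \<forall>\<tau>\<in>set taus. sa \<notin> set \<tau>})"
    unfolding covers_def by auto
  have "measure_pmf.prob (iid_pmf E n) {taus. \<not> covers taus}
      \<le> (\<Sum>sa\<in>UNIV. measure_pmf.prob (iid_pmf E n) {taus. \<forall>\<tau>\<in>set taus. sa \<notin> set \<tau>})"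
    unfolding not_covers by (rule measure_pmf.finite_measure_subadditive_finite) auto
  also have "\<dots> = (\<Sum>sa\<in>UNIV. (1 - measure_pmf.prob E {\<tau>. sa \<in> set \<tau>}) ^ n)"
    by (simp only: prob_iid_pmf_all prob_Collect_not)
  also have "\<dots> \<le> (\<Sum>sa\<in>(UNIV :: ('s \<times> 'a) set). (1 - q) ^ n)"
    using assms by (intro sum_mono power_mono) auto
  finally show ?thesis
    by (simp add: prob_Collect_not)
qed

lemma ln_2_le_of_one_minus_pow_le_half:
  fixes p :: real
  assumes "0 \<le> p" "(1 - p) ^ L \<le> 1 / 2"
  shows "ln 2 \<le> 2 * p * L"
proof (cases "p \<le> 1 / 2")
  case True
  have "- ln 2 = ln (1 / 2 :: real)" by (simp add: ln_div)
  also have "ln (1 / 2) \<ge> ln ((1 - p) ^ L)"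
    using assms True by (subst ln_le_cancel_iff) auto
  also have "ln ((1 - p) ^ L) = L * ln (1 - p)"
    using True by (simp add: ln_realpow)
  also have "L * ln (1 - p) \<ge> L * (- 2 * p)"
  proof (rule mult_left_mono)
    have "p\<^sup>2 \<le> p / 2"
      using True assms(1) mult_left_mono[of p "1 / 2" p] by (simp add: power2_eq_square)
    then show "- 2 * p \<le> ln (1 - p)"
      using ln_one_minus_pos_lower_bound[OF assms(1) True] by linarith
  qed simp
  finally show ?thesis by (simp add: mult.commute)
next
  case False
  then have "L \<noteq> 0" using assms(2) by (cases L) auto
  then have "1 * 1 \<le> 2 * p * L"
    using False by (intro mult_mono) auto
  then show ?thesis using ln_2_less_1 by linarith
qed

lemma mult_one_minus_pow_le_half:
  fixes q K :: real
  assumes "0 < K" "q \<le> 1" "ln (2 * K) \<le> q * n"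
  shows "K * (1 - q) ^ n \<le> 1 / 2"
proof -
  have "(1 - q) ^ n \<le> exp (- q) ^ n"
    using assms(2) by (intro power_mono) (auto simp: exp_ge_add_one_self[of "- q", simplified])
  also have "\<dots> = exp (- (q * n))"
    by (simp add: exp_of_nat_mult[symmetric] mult.commute)
  also have "\<dots> \<le> exp (- ln (2 * K))"
    using assms(3) by simp
  also have "\<dots> = 1 / (2 * K)"
    using assms(1) by (simp add: exp_minus inverse_eq_divide)
  finally show ?thesis
    using assms(1) by (simp add: field_simps)
qed

lemma prob_covers_iid_ge_half:
  fixes E :: "('s::finite \<times> 'a::finite) list pmf"
  assumes "0 < q" "\<forall>sa. q \<le> measure_pmf.prob E {\<tau>. sa \<in> set \<tau>}"
  defines "n \<equiv> nat \<lceil>ln (2 * real CARD('s) * real CARD('a)) / q\<rceil>"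
  shows "1 / 2 \<le> measure_pmf.prob (iid_pmf E n) {taus. covers taus}"
proof -
  let ?K = "real CARD('s \<times> 'a)"
  have "q \<le> 1"
    using assms(2) measure_pmf.prob_le_1 order.trans by blast
  moreover have "ln (2 * ?K) / q \<le> n"
    unfolding n_def by (simp add: mult.assoc real_nat_ceiling_ge)
  then have "ln (2 * ?K) \<le> q * n"
    using assms(1) by (simp add: pos_divide_le_eq mult.commute)
  ultimately have "?K * (1 - q) ^ n \<le> 1 / 2"
    by (intro mult_one_minus_pow_le_half) auto
  then show ?thesis
    using prob_covers_iid_ge[OF assms(2), of n] by linarith
qed

lemma covering_length_le:
  assumes "1 / 2 \<le> measure_pmf.prob (iid_pmf (episode pol f T s1) n) {taus. covers taus}"
  shows "covering_length pol f T s1 \<le> n"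
  unfolding covering_length_def using assms by (rule Least_le)

lemma prob_covers_covering_length:
  assumes "1 / 2 \<le> measure_pmf.prob (iid_pmf (episode pol f T s1) n) {taus. covers taus}"
  shows "1 / 2 \<le> measure_pmf.prob (iid_pmf (episode pol f T s1) (covering_length pol f T s1)) {taus. covers taus}"
  unfolding covering_length_def using assms by (rule LeastI)

lemma covering_length_le_ceiling:
  fixes pol :: "nat \<Rightarrow> 's::finite \<Rightarrow> 'a::finite pmf"
  assumes "0 < q" "\<forall>sa. q \<le> measure_pmf.prob (episode pol f T s1) {\<tau>. sa \<in> set \<tau>}"
  shows "real (covering_length pol f T s1) \<le> of_int \<lceil>ln (2 * real CARD('s) * real CARD('a)) / q\<rceil>"
proof -
  have "1 \<le> real CARD('s) * real CARD('a)"
    by (metis of_nat_mult One_nat_def Suc_leI nat_0_less_mult_iff of_nat_1 of_nat_le_iff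
        zero_less_card_finite)
  then have "0 < ln (2 * real CARD('s) * real CARD('a)) / q"
    using assms(1) by (simp add: mult.assoc)
  then have "of_int \<lceil>ln (2 * real CARD('s) * real CARD('a)) / q\<rceil>
      = real (nat \<lceil>ln (2 * real CARD('s) * real CARD('a)) / q\<rceil>)"
    by (intro of_nat_nat[symmetric]) linarith
  moreover have "covering_length pol f T s1 \<le> nat \<lceil>ln (2 * real CARD('s) * real CARD('a)) / q\<rceil>"
    using assms by (intro covering_length_le prob_covers_iid_ge_half)
  ultimately show ?thesis
    by simp
qed

lemma ln_2_div_le_covering_length:
  assumes "1 / 2 \<le> measure_pmf.prob (iid_pmf (episode pol f T s1) n) {taus. covers taus}"
    and "0 < m" "measure_pmf.prob (episode pol f T s1) {\<tau>. sa \<in> set \<tau>} \<le> m"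
  shows "ln 2 / (2 * m) \<le> real (covering_length pol f T s1)"
proof -
  let ?p = "measure_pmf.prob (episode pol f T s1) {\<tau>. sa \<in> set \<tau>}"
  let ?L = "covering_length pol f T s1"
  have "ln 2 \<le> 2 * ?p * ?L"
  proof (rule ln_2_le_of_one_minus_pow_le_half)
    show "(1 - ?p) ^ ?L \<le> 1 / 2"
      using prob_covers_covering_length[OF assms(1)] prob_covers_iid_le[of "episode pol f T s1" ?L sa] by linarith
  qed simp
  also have "\<dots> \<le> 2 * m * ?L"
    using assms(3) by (intro mult_right_mono) simp_all
  finally show ?thesis
    using assms(2) by (simp add: pos_divide_le_eq mult.commute)
qed

lemma Min_Max_occupancy_le_prob_visit:
  fixes pol :: "nat \<Rightarrow> 's::finite \<Rightarrow> 'a::finite pmf"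
  assumes "0 < T"
  shows "Min ((\<lambda>(s, a). Max ((\<lambda>t. occupancy pol f T s1 t s a) ` {1..T})) ` UNIV)
           \<le> measure_pmf.prob (episode pol f T s1) {\<tau>. (s, a) \<in> set \<tau>}"
proof -
  have "Min ((\<lambda>(s, a). Max ((\<lambda>t. occupancy pol f T s1 t s a) ` {1..T})) ` UNIV)
      \<le> Max ((\<lambda>t. occupancy pol f T s1 t s a) ` {1..T})"
    by (rule Min_le) auto
  also have "\<dots> \<le> measure_pmf.prob (episode pol f T s1) {\<tau>. (s, a) \<in> set \<tau>}"
    using assms by (simp add: Max_le_iff occupancy_le_prob_visit)
  finally show ?thesis .
qed

theorem mainTheorem11:
  fixes pol :: "nat \<Rightarrow> 's::finite \<Rightarrow> 'a::finite pmf"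
    and f :: "'s \<Rightarrow> 'a \<Rightarrow> 's" and T :: nat and s1 :: 's
  assumes "\<forall>s a. \<exists>t\<in>{1..T}. occupancy pol f T s1 t s a > 0"
  shows "ln 2 / (2 * Min ((\<lambda>(s, a). \<Sum>t\<in>{1..T}. occupancy pol f T s1 t s a) ` UNIV))
           \<le> real (covering_length pol f T s1)
         \<and> real (covering_length pol f T s1)
           \<le> of_int \<lceil>ln (2 * real CARD('s) * real CARD('a))
                   / Min ((\<lambda>(s, a). Max ((\<lambda>t. occupancy pol f T s1 t s a) ` {1..T})) ` UNIV)\<rceil>"
proof -
  let ?\<mu> = "occupancy pol f T s1"
  define q where "q = Min ((\<lambda>(s, a). Max ((\<lambda>t. ?\<mu> t s a) ` {1..T})) ` UNIV)"
  define m where "m = Min ((\<lambda>(s, a). \<Sum>t\<in>{1..T}. ?\<mu> t s a) ` UNIV)"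
  have "0 < T"
    using assms by fastforce
  then have "q \<le> measure_pmf.prob (episode pol f T s1) {\<tau>. (s, a) \<in> set \<tau>}" for s a
    unfolding q_def by (rule Min_Max_occupancy_le_prob_visit)
  then have q_le: "\<forall>sa. q \<le> measure_pmf.prob (episode pol f T s1) {\<tau>. sa \<in> set \<tau>}"
    by simp
  have "0 < Max ((\<lambda>t. ?\<mu> t s a) ` {1..T})" "0 < (\<Sum>t\<in>{1..T}. ?\<mu> t s a)" for s a
  proof -
    obtain t where t: "t \<in> {1..T}" "0 < ?\<mu> t s a"
      using assms by blast
    then show "0 < Max ((\<lambda>t. ?\<mu> t s a) ` {1..T})"
      by (subst Max_gr_iff) force+
    show "0 < (\<Sum>t\<in>{1..T}. ?\<mu> t s a)"
      using t by (intro sum_pos2[where i = t]) (auto simp: occupancy_def)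
  qed
  then have "0 < q" "0 < m"
    unfolding q_def m_def by (simp_all add: Min_gr_iff)
  then have covers: "1 / 2 \<le> measure_pmf.prob (iid_pmf (episode pol f T s1)
      (nat \<lceil>ln (2 * real CARD('s) * real CARD('a)) / q\<rceil>)) {taus. covers taus}"
    using q_le by (intro prob_covers_iid_ge_half)
  have "m \<in> (\<lambda>(s, a). \<Sum>t\<in>{1..T}. ?\<mu> t s a) ` UNIV"
    unfolding m_def by (rule Min_in) auto
  then obtain s a where "m = (\<Sum>t\<in>{1..T}. ?\<mu> t s a)"
    by auto
  then have "ln 2 / (2 * m) \<le> real (covering_length pol f T s1)"
    using prob_visit_le_sum_occupancy[of pol f T s1 s a]
    by (intro ln_2_div_le_covering_length[OF covers \<open>0 < m\<close>, where sa = "(s, a)"]) simp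
  moreover have "real (covering_length pol f T s1)
      \<le> of_int \<lceil>ln (2 * real CARD('s) * real CARD('a)) / q\<rceil>"
    using \<open>0 < q\<close> q_le by (rule covering_length_le_ceiling)
  ultimately show ?thesis
    unfolding m_def q_def ..
qed

end
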